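(* Let $(H,\alpha_H)$ be an object of $\overline{\mathcal H}^{i,j}(Vec_\Bbbk)$ and let $\Delta_H:H\to H\otimes H$ (written $h\mapsto h_1\otimes h_2$) and $\varepsilon_H:H\to\Bbbk$ be morphisms in $\overline{\mathcal H}^{i,j}(Vec_\Bbbk)$. Consider the functor $\ddot H=-\otimes H$ on $\overline{\mathcal H}^{i,j}(Vec_\Bbbk)$, $(X,\alpha_X)\mapsto(X\otimes H,\alpha_X\otimes\alpha_H)$, with natural transformations $\delta_X:X\otimes H\to(X\otimes H)\otimes H$, $x\otimes h\mapsto(\alpha_X(x)\otimes h_1)\otimes\alpha_H^{-1}(h_2)$, and $\epsilon_X:X\otimes H\to X$, $x\otimes h\mapsto\varepsilon_H(h)\alpha_X^{-1}(x)$. Then $(\ddot H,\delta,\epsilon)$ is a comonad on $\overline{\mathcal H}^{i,j}(Vec_\Bbbk)$ if and only if $(H,\alpha_H,\Delta_H,\varepsilon_H)$ is a Hom-coalgebra. Moreover, the category of right $H$-Hom-comodules coincides with the category of $\ddot H$-comodules in $\overline{\mathcal H}^{i,j}(Vec_\Bbbk)$.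
   Context: $\Bbbk$ is a field of characteristic $0$; all vector spaces are finite-dimensional; $i,j$ are fixed integers. $\overline{\mathcal H}^{i,j}(Vec_\Bbbk)$ is the monoidal category whose objects are pairs $(X,\alpha_X)$ with $X$ a finite-dimensional $\Bbbk$-space and $\alpha_X$ a linear automorphism of $X$; morphisms $f:(X,\alpha_X)\to(Y,\alpha_Y)$ are linear maps with $\alpha_Y\circ f=f\circ\alpha_X$; $(X,\alpha_X)\otimes(Y,\alpha_Y)=(X\otimes Y,\alpha_X\otimes\alpha_Y)$, unit $(\Bbbk,\mathrm{id})$; associativity $a_{X,Y,Z}((x\otimes y)\otimes z)=\alpha_X^{i+1}(x)\otimes(y\otimes\alpha_Z^{-j-1}(z))$; unit constraints $l_X(\lambda\otimes x)=\lambda\alpha_X^{j+1}(x)$, $r_X(x\otimes\lambda)=\lambda\alpha_X^{i+1}(x)$. A Hom-coalgebra $(C,\alpha,\Delta,\varepsilon)$: $\varepsilon\circ\alpha=\varepsilon$, $\alpha(c_1)\otimes\Delta(c_2)=\Delta(c_1)\otimes\alpha(c_2)$, $\varepsilon(c_1)c_2=c_1\varepsilon(c_2)=\alpha(c)$. A right $H$-Hom-comodule is $(M,\alpha_M,\rho^M)$, $(M,\alpha_M)$ an object of $\overline{\mathcal H}^{i,j}(Vec_\Bbbk)$, $\rho^M:M\to M\otimes H$, $m\mapsto m_0\otimes m_1$, a morphism there, with $\alpha_M(m_0)\otimes\Delta(m_1)=\rho^M(m_0)\otimes\alpha_H(m_1)$ and $\varepsilon(m_1)m_0=\alpha_M(m)$;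 morphisms are colinear maps commuting with the $\alpha$'s. A comonad on a category: endofunctor $F$, natural $\Delta:F\to FF$, $\varepsilon:F\to\mathrm{id}$ with $F\Delta\circ\Delta=\Delta F\circ\Delta$, $F\varepsilon\circ\Delta=\varepsilon F\circ\Delta=\mathrm{id}$; a comodule is $(X,\rho)$, $\rho:X\to FX$, $F\rho\circ\rho=\Delta_X\circ\rho$, $\varepsilon_X\circ\rho=\mathrm{id}_X$. *)

theory Defs
  imports "Jordan_Normal_Form.Matrix"
begin

(* Model of the category \<H>-bar^{i,j}(Vec_k) (a skeleton of it):
   an object (X, alpha_X) is represented by the matrix of alpha_X with respect to
   a chosen basis of X, i.e. an invertible square matrix; dim X = dim_row.  Tensor products of spaces/maps are Kronecker
   products w.r.t. the product basis ordered lexicographically, so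
   (X (x) Y) (x) Z and X (x) (Y (x) Z) have literally the same coordinates. *)

definition kron :: "'a::semiring_1 mat \<Rightarrow> 'a mat \<Rightarrow> 'a mat" where
  "kron A B = mat (dim_row A * dim_row B) (dim_col A * dim_col B)
     (\<lambda>(i, j). A $$ (i div dim_row B, j div dim_col B) * B $$ (i mod dim_row B, j mod dim_col B))"

definition inv_of :: "'a::field mat \<Rightarrow> 'a mat" where
  "inv_of A = (SOME B. B \<in> carrier_mat (dim_row A) (dim_row A) \<and>
       A * B = 1\<^sub>m (dim_row A) \<and> B * A = 1\<^sub>m (dim_row A))"

definition hobj :: "'a::field mat \<Rightarrow> bool" where
  "hobj A \<longleftrightarrow> A \<in> carrier_mat (dim_row A) (dim_row A) \<and> invertible_mat A"

definition hhom :: "'a::field mat \<Rightarrow> 'a mat \<Rightarrow> 'a mat \<Rightarrow> bool" where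
  "hhom A B f \<longleftrightarrow> f \<in> carrier_mat (dim_row B) (dim_row A) \<and> B * f = f * A"

definition is_comonad ::
  "('a::field mat \<Rightarrow> 'a mat) \<Rightarrow> ('a mat \<Rightarrow> 'a mat \<Rightarrow> 'a mat \<Rightarrow> 'a mat)
   \<Rightarrow> ('a mat \<Rightarrow> 'a mat) \<Rightarrow> ('a mat \<Rightarrow> 'a mat) \<Rightarrow> bool" where
  "is_comonad Fo Fm D E \<longleftrightarrow>
     (\<forall>X. hobj X \<longrightarrow> hobj (Fo X)) \<and>
     (\<forall>X Y f. hobj X \<and> hobj Y \<and> hhom X Y f \<longrightarrow> hhom (Fo X) (Fo Y) (Fm X Y f)) \<and>
     (\<forall>X. hobj X \<longrightarrow> Fm X X (1\<^sub>m (dim_row X)) = 1\<^sub>m (dim_row (Fo X))) \<and>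
     (\<forall>X Y Z f g. hobj X \<and> hobj Y \<and> hobj Z \<and> hhom X Y f \<and> hhom Y Z g \<longrightarrow>
         Fm X Z (g * f) = Fm Y Z g * Fm X Y f) \<and>
     (\<forall>X. hobj X \<longrightarrow> hhom (Fo X) (Fo (Fo X)) (D X) \<and> hhom (Fo X) X (E X)) \<and>
     (\<forall>X Y f. hobj X \<and> hobj Y \<and> hhom X Y f \<longrightarrow>
         D Y * Fm X Y f = Fm (Fo X) (Fo Y) (Fm X Y f) * D X \<and>
         E Y * Fm X Y f = f * E X) \<and>
     (\<forall>X. hobj X \<longrightarrow>
         Fm (Fo X) (Fo (Fo X)) (D X) * D X = D (Fo X) * D X \<and>
         Fm (Fo X) X (E X) * D X = 1\<^sub>m (dim_row (Fo X)) \<and>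
         E (Fo X) * D X = 1\<^sub>m (dim_row (Fo X)))"

definition comonad_comodule ::
  "('a::field mat \<Rightarrow> 'a mat) \<Rightarrow> ('a mat \<Rightarrow> 'a mat \<Rightarrow> 'a mat \<Rightarrow> 'a mat)
   \<Rightarrow> ('a mat \<Rightarrow> 'a mat) \<Rightarrow> ('a mat \<Rightarrow> 'a mat) \<Rightarrow> 'a mat \<Rightarrow> 'a mat \<Rightarrow> bool" where
  "comonad_comodule Fo Fm D E X \<rho> \<longleftrightarrow> hobj X \<and> hhom X (Fo X) \<rho> \<and>
     Fm X (Fo X) \<rho> * \<rho> = D X * \<rho> \<and> E X * \<rho> = 1\<^sub>m (dim_row X)"

definition comonad_comodule_hom ::
  "('a::field mat \<Rightarrow> 'a mat) \<Rightarrow> ('a mat \<Rightarrow> 'a mat \<Rightarrow> 'a mat \<Rightarrow> 'a mat)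
   \<Rightarrow> 'a mat \<Rightarrow> 'a mat \<Rightarrow> 'a mat \<Rightarrow> 'a mat \<Rightarrow> 'a mat \<Rightarrow> bool" where
  "comonad_comodule_hom Fo Fm X \<rho> Y \<sigma> f \<longleftrightarrow> hhom X Y f \<and> \<sigma> * f = Fm X Y f * \<rho>"

(* Hom-coalgebra (H, alpha, Delta, eps); Delta : d*d x d matrix, eps : 1 x d matrix *)
definition hom_coalgebra :: "'a::field mat \<Rightarrow> 'a mat \<Rightarrow> 'a mat \<Rightarrow> bool" where
  "hom_coalgebra \<alpha> \<Delta> \<epsilon> \<longleftrightarrow>
     \<epsilon> * \<alpha> = \<epsilon> \<and>
     kron \<alpha> \<Delta> * \<Delta> = kron \<Delta> \<alpha> * \<Delta> \<and>
     kron \<epsilon> (1\<^sub>m (dim_row \<alpha>)) * \<Delta> = \<alpha> \<and>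
     kron (1\<^sub>m (dim_row \<alpha>)) \<epsilon> * \<Delta> = \<alpha>"

definition hom_comodule :: "'a::field mat \<Rightarrow> 'a mat \<Rightarrow> 'a mat \<Rightarrow> 'a mat \<Rightarrow> 'a mat \<Rightarrow> bool" where
  "hom_comodule \<alpha>H \<Delta> \<epsilon> \<alpha>M \<rho> \<longleftrightarrow> hobj \<alpha>M \<and> hhom \<alpha>M (kron \<alpha>M \<alpha>H) \<rho> \<and>
     kron \<alpha>M \<Delta> * \<rho> = kron \<rho> \<alpha>H * \<rho> \<and>
     kron (1\<^sub>m (dim_row \<alpha>M)) \<epsilon> * \<rho> = \<alpha>M"

definition hom_comodule_hom :: "'a::field mat \<Rightarrow> 'a mat \<Rightarrow> 'a mat \<Rightarrow> 'a mat \<Rightarrow> 'a mat \<Rightarrow> 'a mat \<Rightarrow> bool" where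
  "hom_comodule_hom \<alpha>H \<alpha>M \<rho> \<alpha>N \<sigma> f \<longleftrightarrow> hhom \<alpha>M \<alpha>N f \<and> \<sigma> * f = kron f (1\<^sub>m (dim_row \<alpha>H)) * \<rho>"

definition Hdd_obj :: "'a::field mat \<Rightarrow> 'a mat \<Rightarrow> 'a mat" where
  "Hdd_obj \<alpha>H X = kron X \<alpha>H"

definition Hdd_mor :: "'a::field mat \<Rightarrow> 'a mat \<Rightarrow> 'a mat \<Rightarrow> 'a mat \<Rightarrow> 'a mat" where
  "Hdd_mor \<alpha>H X Y f = kron f (1\<^sub>m (dim_row \<alpha>H))"

(* delta_X (x (x) h) = (alpha_X x (x) h1) (x) alpha_H^{-1} h2 *)
definition Hdd_delta :: "'a::field mat \<Rightarrow> 'a mat \<Rightarrow> 'a mat \<Rightarrow> 'a mat" where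
  "Hdd_delta \<alpha>H \<Delta> X = kron X (kron (1\<^sub>m (dim_row \<alpha>H)) (inv_of \<alpha>H) * \<Delta>)"

(* eps_X (x (x) h) = eps_H(h) alpha_X^{-1} x *)
definition Hdd_eps :: "'a::field mat \<Rightarrow> 'a mat \<Rightarrow> 'a mat \<Rightarrow> 'a mat" where
  "Hdd_eps \<alpha>H \<epsilon> X = kron (inv_of X) \<epsilon>"

end

theory Submission
  imports Defs
begin

text \<open>
  The functor \<open>- \<otimes> H\<close> with \<open>\<delta>\<close> and \<open>\<epsilon>\<close> is determined by a single datum: all components
  are Kronecker products \<open>\<delta>\<^sub>X = X \<otimes> \<delta>\<^sub>\<bbbk>\<close> and \<open>\<epsilon>\<^sub>X = X\<^sup>-\<^sup>1 \<otimes> \<epsilon>\<^sub>H\<close>, where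
  \<open>\<delta>\<^sub>\<bbbk> = (id \<otimes> \<alpha>\<^sub>H\<^sup>-\<^sup>1) \<Delta>\<^sub>H\<close> is the component at the unit object.  By the mixed-product rule
  each comonad law at \<open>X\<close> is the same law at the unit object tensored with \<open>X \<otimes> X\<close>
  (or with \<open>id\<^sub>X\<close>), so the comonad laws amount to three identities for \<open>\<delta>\<^sub>\<bbbk>\<close> and \<open>\<epsilon>\<^sub>H\<close>.
  Since \<open>\<alpha>\<^sub>H\<close> is invertible and commutes with \<open>\<Delta>\<^sub>H\<close> and \<open>\<epsilon>\<^sub>H\<close>, multiplying these identities
  by tensor powers of \<open>\<alpha>\<^sub>H\<^sup>\<plusminus>\<^sup>1\<close> turns them into Hom-coassociativity and the two Hom-counit laws.
  The comodule axioms are compared in the same way, and comodule morphisms coincide literally.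
\<close>

section \<open>Kronecker products of matrices\<close>

lemma sum_lessThan_mult_split:
  "(\<Sum>k<n * q. f k) = (\<Sum>a<n. \<Sum>b<q. f (a * q + b :: nat) :: 'b::comm_monoid_add)"
proof (induction n)
  case (Suc n)
  have "(\<Sum>k<Suc n * q. f k) = (\<Sum>k<n * q. f k) + (\<Sum>k\<in>{n * q..<n * q + q}. f k)"
    by (simp add: add.commute lessThan_atLeast0 sum.union_disjoint[symmetric] ivl_disj_un)
  also have "(\<Sum>k\<in>{n * q..<n * q + q}. f k) = (\<Sum>b<q. f (n * q + b))"
    using sum.shift_bounds_nat_ivl[of f 0 "n * q" q] by (simp add: lessThan_atLeast0 add.commute)
  finally show ?case using Suc by simp
qed simp

lemma index_mult_mat_sum:
  "i < dim_row A \<Longrightarrow> j < dim_col B \<Longrightarrow> dim_col A = dim_row B \<Longrightarrow>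
   (A * B) $$ (i, j) = (\<Sum>k<dim_col A. A $$ (i, k) * B $$ (k, j))"
  by (simp add: scalar_prod_def lessThan_atLeast0)

lemma kron_dims [simp]:
  "dim_row (kron A B) = dim_row A * dim_row B"
  "dim_col (kron A B) = dim_col A * dim_col B"
  by (auto simp: kron_def)

lemma index_kron:
  "i < dim_row A * dim_row B \<Longrightarrow> j < dim_col A * dim_col B \<Longrightarrow>
   kron A B $$ (i, j) = A $$ (i div dim_row B, j div dim_col B) * B $$ (i mod dim_row B, j mod dim_col B)"
  by (simp add: kron_def)

lemma kron_mult_kron:
  fixes A B C D :: "'a::comm_semiring_1 mat"
  assumes AC: "dim_col A = dim_row C" and BD: "dim_col B = dim_row D"
  shows "kron A B * kron C D = kron (A * C) (B * D)"
proof (rule eq_matI)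
  let ?p = "dim_row B" and ?s = "dim_col D" and ?n = "dim_col A" and ?q = "dim_col B"
  fix i j assume "i < dim_row (kron (A * C) (B * D))" and "j < dim_col (kron (A * C) (B * D))"
  then have i: "i < dim_row A * ?p" and j: "j < dim_col C * ?s" by auto
  have "?p > 0" "?s > 0" using i j by (auto intro: gr0I)
  then have ij: "i div ?p < dim_row A" "i mod ?p < ?p" "j div ?s < dim_col C" "j mod ?s < ?s"
    using i j by (auto simp: less_mult_imp_div_less)
  have "(kron A B * kron C D) $$ (i, j) = (\<Sum>k<?n * ?q. kron A B $$ (i, k) * kron C D $$ (k, j))"
    using i j AC BD by (subst index_mult_mat_sum) auto
  also have "\<dots> = (\<Sum>a<?n. \<Sum>b<?q. kron A B $$ (i, a * ?q + b) * kron C D $$ (a * ?q + b, j))"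
    by (rule sum_lessThan_mult_split)
  also have "\<dots> = (\<Sum>a<?n. \<Sum>b<?q. (A $$ (i div ?p, a) * C $$ (a, j div ?s)) *
                                      (B $$ (i mod ?p, b) * D $$ (b, j mod ?s)))"
  proof (intro sum.cong refl)
    fix a b assume a: "a \<in> {..<?n}" and b: "b \<in> {..<?q}"
    have "a * ?q + b < (a + 1) * ?q" using b by simp
    also have "\<dots> \<le> ?n * ?q" using a by (intro mult_le_mono1) simp
    finally have "a * ?q + b < ?n * ?q" .
    moreover have "(a * ?q + b) div ?q = a" "(a * ?q + b) mod ?q = b" using b by auto
    ultimately show "kron A B $$ (i, a * ?q + b) * kron C D $$ (a * ?q + b, j) =
        (A $$ (i div ?p, a) * C $$ (a, j div ?s)) * (B $$ (i mod ?p, b) * D $$ (b, j mod ?s))"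
      using AC BD i j by (simp add: index_kron mult_ac)
  qed
  also have "\<dots> = (\<Sum>a<?n. A $$ (i div ?p, a) * C $$ (a, j div ?s)) *
                  (\<Sum>b<?q. B $$ (i mod ?p, b) * D $$ (b, j mod ?s))"
    by (simp add: sum_product)
  also have "\<dots> = kron (A * C) (B * D) $$ (i, j)"
    using AC BD i j ij by (simp add: index_kron scalar_prod_def lessThan_atLeast0)
  finally show "(kron A B * kron C D) $$ (i, j) = kron (A * C) (B * D) $$ (i, j)" .
qed auto

lemma kron_assoc: "kron (kron A B) C = kron A (kron B C)"
proof (rule eq_matI)
  let ?b = "dim_row B" and ?c = "dim_row C" and ?y = "dim_col B" and ?z = "dim_col C"
  fix i j assume "i < dim_row (kron A (kron B C))" and "j < dim_col (kron A (kron B C))"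
  then have i: "i < dim_row A * ?b * ?c" and j: "j < dim_col A * ?y * ?z" by (auto simp: mult.assoc)
  have mod_div: "k mod (m * n) div n = k div n mod m" for k m n :: nat
    using mod_mult2_eq[of k n m] by (cases "n = 0") (simp_all add: mult.commute)
  have div_div: "k div (m * n) = k div n div m" for k m n :: nat
    by (metis div_mult2_eq mult.commute)
  have "?b * ?c > 0" "?y * ?z > 0" using i j by (auto intro: gr0I)
  then have "i div ?c < dim_row A * ?b" "j div ?z < dim_col A * ?y"
    "i mod (?b * ?c) < ?b * ?c" "j mod (?y * ?z) < ?y * ?z"
    using i j by (auto simp: less_mult_imp_div_less mult.assoc)
  then show "kron (kron A B) C $$ (i, j) = kron A (kron B C) $$ (i, j)"
    using i j by (simp add: index_kron mult.assoc div_div mod_div mod_mod_cancel)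
qed (auto simp: mult.assoc)

lemma kron_one_mat: "kron (1\<^sub>m m) (1\<^sub>m n) = (1\<^sub>m (m * n) :: 'a::semiring_1 mat)"
proof (rule eq_matI)
  fix i j assume "i < dim_row (1\<^sub>m (m * n) :: 'a mat)" and "j < dim_col (1\<^sub>m (m * n) :: 'a mat)"
  then have i: "i < m * n" and j: "j < m * n" by auto
  then have "n > 0" by (cases n) auto
  moreover have "i div n < m" "j div n < m" using i j by (auto simp: less_mult_imp_div_less)
  moreover have "(i div n = j div n \<and> i mod n = j mod n) = (i = j)"
    by (metis div_mult_mod_eq)
  ultimately show "kron (1\<^sub>m m) (1\<^sub>m n) $$ (i, j) = (1\<^sub>m (m * n) :: 'a mat) $$ (i, j)"
    using i j by (auto simp: index_kron)
qed auto

lemma kron_one_mat_1 [simp]: "kron (1\<^sub>m 1) A = A" "kron A (1\<^sub>m 1) = A"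
  by (rule eq_matI; auto simp: index_kron)+

text \<open>Simplification often turns the dimension \<open>1\<close> into \<open>Suc 0\<close>.\<close>

lemma kron_one_mat_Suc_0 [simp]: "kron (1\<^sub>m (Suc 0)) A = A" "kron A (1\<^sub>m (Suc 0)) = A"
  using kron_one_mat_1[of A] by simp_all

lemma mult_kron_single_row:
  fixes A B C :: "'a::comm_semiring_1 mat"
  assumes "dim_row B = 1" and "dim_col A = dim_row C"
  shows "A * kron C B = kron (A * C) B"
  using kron_mult_kron[where B = "1\<^sub>m 1" and D = B] assms by simp

section \<open>Invertible matrices\<close>

declare assoc_mult_mat [simp del]

lemma assoc_mult_mat':
  "dim_col A = dim_row B \<Longrightarrow> dim_col B = dim_row C \<Longrightarrow> A * B * C = A * (B * C :: 'a::semiring_1 mat)"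
  by (rule assoc_mult_mat[of A "dim_row A" "dim_col A" B "dim_col B" C "dim_col C"]) auto

lemma hobjI:
  fixes A B :: "'a::field mat"
  assumes "A \<in> carrier_mat n n" "B \<in> carrier_mat n n" "A * B = 1\<^sub>m n" "B * A = 1\<^sub>m n"
  shows "hobj A"
  using assms unfolding hobj_def invertible_mat_def inverts_mat_def by auto

lemma hobj_inv_of:
  fixes A :: "'a::field mat"
  assumes "hobj A"
  shows "dim_col A = dim_row A" "dim_row (inv_of A) = dim_row A" "dim_col (inv_of A) = dim_row A"
    and "A * inv_of A = 1\<^sub>m (dim_row A)" and "inv_of A * A = 1\<^sub>m (dim_row A)"
proof -
  from assms obtain B where sq: "dim_col A = dim_row A"
    and AB: "A * B = 1\<^sub>m (dim_row A)" and BA: "B * A = 1\<^sub>m (dim_row B)"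
    unfolding hobj_def invertible_mat_def inverts_mat_def by auto
  have "dim_col B = dim_row A" "dim_row B = dim_row A"
    using arg_cong[OF AB, of dim_col] arg_cong[OF BA, of dim_col] sq by simp_all
  then have "\<exists>B. B \<in> carrier_mat (dim_row A) (dim_row A) \<and>
      A * B = 1\<^sub>m (dim_row A) \<and> B * A = 1\<^sub>m (dim_row A)"
    using AB BA by (intro exI[of _ B]) auto
  then have "inv_of A \<in> carrier_mat (dim_row A) (dim_row A) \<and>
      A * inv_of A = 1\<^sub>m (dim_row A) \<and> inv_of A * A = 1\<^sub>m (dim_row A)"
    unfolding inv_of_def by (rule someI_ex)
  then show "dim_row (inv_of A) = dim_row A" "dim_col (inv_of A) = dim_row A"
    and "A * inv_of A = 1\<^sub>m (dim_row A)" and "inv_of A * A = 1\<^sub>m (dim_row A)" by auto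
  show "dim_col A = dim_row A" by (rule sq)
qed

lemma inv_of_eqI:
  fixes A B :: "'a::field mat"
  assumes A: "hobj A" and B: "dim_row B = dim_row A" "dim_col B = dim_row A"
    and AB: "A * B = 1\<^sub>m (dim_row A)"
  shows "inv_of A = B"
proof -
  note a = hobj_inv_of[OF A]
  have "inv_of A = inv_of A * (A * B)" by (simp add: AB a)
  also have "\<dots> = (inv_of A * A) * B" by (rule assoc_mult_mat'[symmetric]) (simp_all add: a B)
  also have "\<dots> = B" by (simp add: a B)
  finally show ?thesis .
qed

lemma hobj_kron:
  fixes A B :: "'a::field mat"
  assumes A: "hobj A" and B: "hobj B"
  shows "hobj (kron A B)" and "inv_of (kron A B) = kron (inv_of A) (inv_of B)"
proof -
  note a = hobj_inv_of[OF A] and b = hobj_inv_of[OF B]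
  let ?n = "dim_row A * dim_row B"
  have inverse: "kron A B * kron (inv_of A) (inv_of B) = 1\<^sub>m ?n"
    "kron (inv_of A) (inv_of B) * kron A B = 1\<^sub>m ?n"
    by (subst kron_mult_kron; simp only: a b kron_one_mat)+
  show h: "hobj (kron A B)"
    by (rule hobjI[OF _ _ inverse]) (simp_all only: carrier_mat_def mem_Collect_eq kron_dims a b)
  show "inv_of (kron A B) = kron (inv_of A) (inv_of B)"
    by (rule inv_of_eqI[OF h]) (simp_all only: a b inverse(1) kron_dims)
qed

lemma hobj_one_mat: "hobj (1\<^sub>m n :: 'a::field mat)"
  by (rule hobjI[where B = "1\<^sub>m n"]) simp_all

lemma inv_of_one_mat: "inv_of (1\<^sub>m n :: 'a::field mat) = 1\<^sub>m n"
  by (rule inv_of_eqI[OF hobj_one_mat]) simp_all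

lemma mult_left_cancel_invertible:
  fixes P Q X Y :: "'a::semiring_1 mat"
  assumes QP: "Q * P = 1\<^sub>m n" and dims: "dim_col Q = dim_row P" "dim_col P = n"
    "dim_row X = n" "dim_row Y = n"
    and eq: "P * X = P * Y"
  shows "X = Y"
proof -
  have "X = (Q * P) * X" using dims by (simp add: QP)
  also have "\<dots> = Q * (P * Y)" using dims by (simp add: assoc_mult_mat' eq)
  also have "\<dots> = (Q * P) * Y" using dims by (simp add: assoc_mult_mat')
  finally show ?thesis using dims by (simp add: QP)
qed

lemma eq_mult_iff_inverse_eq:
  fixes P Q A B :: "'a::semiring_1 mat"
  assumes PQ: "P * Q = 1\<^sub>m n" and QP: "Q * P = 1\<^sub>m n"
    and dims: "dim_row P = n" "dim_col P = n" "dim_row Q = n" "dim_col Q = n"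
      "dim_row A = n" "dim_row B = n"
  shows "A = P * B \<longleftrightarrow> B = Q * A"
proof
  assume A: "A = P * B"
  have "Q * (P * B) = (Q * P) * B" by (rule assoc_mult_mat'[symmetric]) (use dims in auto)
  then show "B = Q * A" using dims by (simp add: A QP)
next
  assume B: "B = Q * A"
  have "P * (Q * A) = (P * Q) * A" by (rule assoc_mult_mat'[symmetric]) (use dims in auto)
  then show "A = P * B" using dims by (simp add: B PQ)
qed

lemma hhom_kron_one_mat:
  fixes X Y f a :: "'a::field mat"
  assumes X: "hobj X" and Y: "hobj Y" and f: "hhom X Y f" and a: "dim_col a = dim_row a"
  shows "hhom (kron X a) (kron Y a) (kron f (1\<^sub>m (dim_row a)))"
proof -
  have fd: "dim_row f = dim_row Y" "dim_col f = dim_row X" and fe: "Y * f = f * X"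
    using f by (auto simp: hhom_def)
  have "kron Y a * kron f (1\<^sub>m (dim_row a)) = kron f (1\<^sub>m (dim_row a)) * kron X a"
    by (simp add: kron_mult_kron hobj_inv_of[OF X] hobj_inv_of[OF Y] fd fe a)
  then show ?thesis unfolding hhom_def
    by (intro conjI carrier_matI) (simp_all add: hobj_inv_of[OF X] hobj_inv_of[OF Y] fd)
qed

section \<open>The comonad \<open>- \<otimes> H\<close>\<close>

locale hom_coalgebra_datum =
  fixes \<alpha> \<Delta> \<epsilon> :: "'a::field mat"
  assumes obj: "hobj \<alpha>"
    and comult_hom: "hhom \<alpha> (kron \<alpha> \<alpha>) \<Delta>"
    and counit_hom: "hhom \<alpha> (1\<^sub>m 1) \<epsilon>"
begin

abbreviation n :: nat where "n \<equiv> dim_row \<alpha>"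

definition unit_delta :: "'a mat" where
  "unit_delta = kron (1\<^sub>m n) (inv_of \<alpha>) * \<Delta>"

lemma datum_dims [simp]:
  "dim_col \<alpha> = n" "dim_row (inv_of \<alpha>) = n" "dim_col (inv_of \<alpha>) = n"
  "dim_row \<Delta> = n * n" "dim_col \<Delta> = n" "dim_row \<epsilon> = 1" "dim_col \<epsilon> = n"
  "dim_row unit_delta = n * n" "dim_col unit_delta = n"
  using hobj_inv_of[OF obj] comult_hom counit_hom by (auto simp: hhom_def unit_delta_def)

lemma alpha_inv_of [simp]: "\<alpha> * inv_of \<alpha> = 1\<^sub>m n" "inv_of \<alpha> * \<alpha> = 1\<^sub>m n"
  using hobj_inv_of[OF obj] by simp_all

lemma comult_alpha: "kron \<alpha> \<alpha> * \<Delta> = \<Delta> * \<alpha>"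
  using comult_hom by (simp add: hhom_def)

lemma counit_alpha: "\<epsilon> * \<alpha> = \<epsilon>"
  using counit_hom by (simp add: hhom_def)

lemma counit_inv: "\<epsilon> * inv_of \<alpha> = \<epsilon>"
proof -
  have "\<epsilon> * inv_of \<alpha> = (\<epsilon> * \<alpha>) * inv_of \<alpha>" by (simp add: counit_alpha)
  also have "\<dots> = \<epsilon>" by (simp add: assoc_mult_mat')
  finally show ?thesis .
qed

lemma comult_inv: "\<Delta> * inv_of \<alpha> = kron (inv_of \<alpha>) (inv_of \<alpha>) * \<Delta>"
proof -
  have "kron (inv_of \<alpha>) (inv_of \<alpha>) * \<Delta> = kron (inv_of \<alpha>) (inv_of \<alpha>) * (\<Delta> * \<alpha>) * inv_of \<alpha>"
    by (simp add: assoc_mult_mat')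
  also have "\<dots> = (kron (inv_of \<alpha>) (inv_of \<alpha>) * kron \<alpha> \<alpha>) * \<Delta> * inv_of \<alpha>"
    by (simp add: comult_alpha assoc_mult_mat')
  also have "\<dots> = \<Delta> * inv_of \<alpha>" by (simp add: kron_mult_kron kron_one_mat)
  finally show ?thesis by simp
qed

lemma unit_delta_hom: "kron \<alpha> \<alpha> * unit_delta = unit_delta * \<alpha>"
proof -
  have "kron \<alpha> \<alpha> * unit_delta = (kron \<alpha> \<alpha> * kron (1\<^sub>m n) (inv_of \<alpha>)) * \<Delta>"
    unfolding unit_delta_def by (simp add: assoc_mult_mat')
  also have "\<dots> = kron \<alpha> (1\<^sub>m n) * \<Delta>" by (simp add: kron_mult_kron)
  also have "\<dots> = (kron (1\<^sub>m n) (inv_of \<alpha>) * kron \<alpha> \<alpha>) * \<Delta>" by (simp add: kron_mult_kron)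
  also have "\<dots> = unit_delta * \<alpha>"
    unfolding unit_delta_def by (simp add: assoc_mult_mat' comult_alpha)
  finally show ?thesis .
qed

lemma inv_mult_eq_one_iff:
  assumes "dim_row Y = n"
  shows "inv_of \<alpha> * Y = 1\<^sub>m n \<longleftrightarrow> Y = \<alpha>"
proof
  assume "inv_of \<alpha> * Y = 1\<^sub>m n"
  then have "\<alpha> * (inv_of \<alpha> * Y) = \<alpha>" by simp
  then show "Y = \<alpha>" using assms by (simp add: assoc_mult_mat'[symmetric])
qed simp

text \<open>Both sides of the coassociativity law for \<open>unit_delta\<close> carry the same invertible
  factor \<open>id \<otimes> \<alpha>\<^sup>-\<^sup>1 \<otimes> \<alpha>\<^sup>-\<^sup>2\<close> in front of the corresponding side of Hom-coassociativity.\<close>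

lemma kron_unit_delta_one_mult_unit_delta:
  "kron unit_delta (1\<^sub>m n) * unit_delta
   = kron (1\<^sub>m n) (kron (inv_of \<alpha>) (inv_of \<alpha> * inv_of \<alpha>)) * (kron \<Delta> \<alpha> * \<Delta>)"
proof -
  have factor: "kron unit_delta (1\<^sub>m n) = kron (1\<^sub>m n) (kron (inv_of \<alpha>) (1\<^sub>m n)) * kron \<Delta> (1\<^sub>m n)"
    unfolding unit_delta_def by (simp add: kron_mult_kron kron_assoc[symmetric])
  have "(inv_of \<alpha> * inv_of \<alpha>) * \<alpha> = inv_of \<alpha>" by (simp add: assoc_mult_mat')
  then have swap: "kron \<Delta> (1\<^sub>m n) * kron (1\<^sub>m n) (inv_of \<alpha>)
      = kron (kron (1\<^sub>m n) (1\<^sub>m n)) (inv_of \<alpha> * inv_of \<alpha>) * kron \<Delta> \<alpha>"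
    by (simp add: kron_mult_kron kron_one_mat)
  have "kron unit_delta (1\<^sub>m n) * unit_delta
     = kron (1\<^sub>m n) (kron (inv_of \<alpha>) (1\<^sub>m n)) *
       ((kron \<Delta> (1\<^sub>m n) * kron (1\<^sub>m n) (inv_of \<alpha>)) * \<Delta>)"
    unfolding factor by (simp add: unit_delta_def assoc_mult_mat')
  also have "\<dots> = (kron (1\<^sub>m n) (kron (inv_of \<alpha>) (1\<^sub>m n)) *
       kron (1\<^sub>m n) (kron (1\<^sub>m n) (inv_of \<alpha> * inv_of \<alpha>))) * (kron \<Delta> \<alpha> * \<Delta>)"
    unfolding swap by (simp add: assoc_mult_mat' kron_assoc)
  also have "\<dots> = kron (1\<^sub>m n) (kron (inv_of \<alpha>) (inv_of \<alpha> * inv_of \<alpha>)) * (kron \<Delta> \<alpha> * \<Delta>)"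
    by (simp add: kron_mult_kron)
  finally show ?thesis .
qed

lemma kron_alpha_unit_delta_mult_unit_delta:
  "kron \<alpha> unit_delta * unit_delta
   = kron (1\<^sub>m n) (kron (inv_of \<alpha>) (inv_of \<alpha> * inv_of \<alpha>)) * (kron \<alpha> \<Delta> * \<Delta>)"
proof -
  have factor: "kron \<alpha> unit_delta = kron (1\<^sub>m n) (kron (1\<^sub>m n) (inv_of \<alpha>)) * kron \<alpha> \<Delta>"
    unfolding unit_delta_def by (simp add: kron_mult_kron)
  have swap: "kron \<alpha> \<Delta> * kron (1\<^sub>m n) (inv_of \<alpha>) = kron (1\<^sub>m n) (kron (inv_of \<alpha>) (inv_of \<alpha>)) * kron \<alpha> \<Delta>"
    by (simp add: kron_mult_kron comult_inv)
  have "kron \<alpha> unit_delta * unit_delta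
     = kron (1\<^sub>m n) (kron (1\<^sub>m n) (inv_of \<alpha>)) * ((kron \<alpha> \<Delta> * kron (1\<^sub>m n) (inv_of \<alpha>)) * \<Delta>)"
    unfolding factor by (simp add: unit_delta_def assoc_mult_mat')
  also have "\<dots> = (kron (1\<^sub>m n) (kron (1\<^sub>m n) (inv_of \<alpha>)) *
       kron (1\<^sub>m n) (kron (inv_of \<alpha>) (inv_of \<alpha>))) * (kron \<alpha> \<Delta> * \<Delta>)"
    unfolding swap by (simp add: assoc_mult_mat')
  also have "\<dots> = kron (1\<^sub>m n) (kron (inv_of \<alpha>) (inv_of \<alpha> * inv_of \<alpha>)) * (kron \<alpha> \<Delta> * \<Delta>)"
    by (simp add: kron_mult_kron)
  finally show ?thesis .
qed

lemma unit_delta_coassoc_iff: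
  "kron unit_delta (1\<^sub>m n) * unit_delta = kron \<alpha> unit_delta * unit_delta \<longleftrightarrow>
   kron \<alpha> \<Delta> * \<Delta> = kron \<Delta> \<alpha> * \<Delta>"
proof
  let ?P = "kron (1\<^sub>m n) (kron (inv_of \<alpha>) (inv_of \<alpha> * inv_of \<alpha>))"
  let ?Q = "kron (1\<^sub>m n) (kron \<alpha> (\<alpha> * \<alpha>))"
  have "\<alpha> * \<alpha> * (inv_of \<alpha> * inv_of \<alpha>) = \<alpha> * ((\<alpha> * inv_of \<alpha>) * inv_of \<alpha>)"
    by (simp del: alpha_inv_of add: assoc_mult_mat')
  also have "\<dots> = 1\<^sub>m n" by simp
  finally have QP: "?Q * ?P = 1\<^sub>m (n * (n * n))" by (simp add: kron_mult_kron kron_one_mat)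
  assume "kron unit_delta (1\<^sub>m n) * unit_delta = kron \<alpha> unit_delta * unit_delta"
  then have "?P * (kron \<alpha> \<Delta> * \<Delta>) = ?P * (kron \<Delta> \<alpha> * \<Delta>)"
    by (simp add: kron_unit_delta_one_mult_unit_delta kron_alpha_unit_delta_mult_unit_delta)
  then show "kron \<alpha> \<Delta> * \<Delta> = kron \<Delta> \<alpha> * \<Delta>"
    by (rule mult_left_cancel_invertible[OF QP, rotated -1]) simp_all
qed (simp add: kron_unit_delta_one_mult_unit_delta kron_alpha_unit_delta_mult_unit_delta)

lemma unit_delta_left_counit_iff:
  "kron \<epsilon> (1\<^sub>m n) * unit_delta = 1\<^sub>m n \<longleftrightarrow> kron \<epsilon> (1\<^sub>m n) * \<Delta> = \<alpha>"
proof -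
  have "kron \<epsilon> (1\<^sub>m n) * unit_delta = (kron \<epsilon> (1\<^sub>m n) * kron (1\<^sub>m n) (inv_of \<alpha>)) * \<Delta>"
    unfolding unit_delta_def by (simp add: assoc_mult_mat')
  also have "kron \<epsilon> (1\<^sub>m n) * kron (1\<^sub>m n) (inv_of \<alpha>) = inv_of \<alpha> * kron \<epsilon> (1\<^sub>m n)"
    using kron_mult_kron[where A = "1\<^sub>m 1" and B = "inv_of \<alpha>" and C = \<epsilon> and D = "1\<^sub>m n"]
    by (simp add: kron_mult_kron)
  also have "\<dots> * \<Delta> = inv_of \<alpha> * (kron \<epsilon> (1\<^sub>m n) * \<Delta>)" by (simp add: assoc_mult_mat')
  finally show ?thesis by (simp add: inv_mult_eq_one_iff)
qed

lemma unit_delta_right_counit_iff: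
  "kron (inv_of \<alpha>) \<epsilon> * unit_delta = 1\<^sub>m n \<longleftrightarrow> kron (1\<^sub>m n) \<epsilon> * \<Delta> = \<alpha>"
proof -
  have "kron (inv_of \<alpha>) \<epsilon> * unit_delta = (kron (inv_of \<alpha>) \<epsilon> * kron (1\<^sub>m n) (inv_of \<alpha>)) * \<Delta>"
    unfolding unit_delta_def by (simp add: assoc_mult_mat')
  also have "kron (inv_of \<alpha>) \<epsilon> * kron (1\<^sub>m n) (inv_of \<alpha>) = inv_of \<alpha> * kron (1\<^sub>m n) \<epsilon>"
    using kron_mult_kron[where A = "inv_of \<alpha>" and B = "1\<^sub>m 1" and C = "1\<^sub>m n" and D = \<epsilon>]
    by (simp add: kron_mult_kron counit_inv)
  also have "\<dots> * \<Delta> = inv_of \<alpha> * (kron (1\<^sub>m n) \<epsilon> * \<Delta>)" by (simp add: assoc_mult_mat')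
  finally show ?thesis by (simp add: inv_mult_eq_one_iff)
qed

definition unit_comonad_laws :: bool where
  "unit_comonad_laws \<longleftrightarrow>
     kron unit_delta (1\<^sub>m n) * unit_delta = kron \<alpha> unit_delta * unit_delta \<and>
     kron \<epsilon> (1\<^sub>m n) * unit_delta = 1\<^sub>m n \<and>
     kron (inv_of \<alpha>) \<epsilon> * unit_delta = 1\<^sub>m n"

lemma hom_coalgebra_iff_unit_comonad_laws: "hom_coalgebra \<alpha> \<Delta> \<epsilon> \<longleftrightarrow> unit_comonad_laws"
  by (simp add: hom_coalgebra_def unit_comonad_laws_def counit_alpha unit_delta_coassoc_iff
      unit_delta_left_counit_iff unit_delta_right_counit_iff)

lemma Hdd_simps:
  "Hdd_obj \<alpha> X = kron X \<alpha>" "Hdd_mor \<alpha> X Y f = kron f (1\<^sub>m n)"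
  "Hdd_delta \<alpha> \<Delta> X = kron X unit_delta" "Hdd_eps \<alpha> \<epsilon> X = kron (inv_of X) \<epsilon>"
  by (simp_all add: Hdd_obj_def Hdd_mor_def Hdd_delta_def Hdd_eps_def unit_delta_def)

lemma Hdd_delta_hhom:
  assumes X: "hobj X"
  shows "hhom (kron X \<alpha>) (kron (kron X \<alpha>) \<alpha>) (kron X unit_delta)"
proof -
  note x = hobj_inv_of[OF X]
  have "kron (kron X \<alpha>) \<alpha> * kron X unit_delta = kron (X * X) (kron \<alpha> \<alpha> * unit_delta)"
    by (simp add: kron_assoc kron_mult_kron x)
  also have "\<dots> = kron X unit_delta * kron X \<alpha>"
    by (simp add: unit_delta_hom kron_mult_kron x)
  finally show ?thesis unfolding hhom_def
    by (intro conjI carrier_matI) (simp_all add: x)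
qed

lemma Hdd_eps_hhom:
  assumes X: "hobj X"
  shows "hhom (kron X \<alpha>) X (kron (inv_of X) \<epsilon>)"
proof -
  note x = hobj_inv_of[OF X]
  have "X * kron (inv_of X) \<epsilon> = kron (1\<^sub>m (dim_row X)) \<epsilon>"
    by (simp add: mult_kron_single_row x)
  also have "\<dots> = kron (inv_of X) \<epsilon> * kron X \<alpha>"
    by (simp add: kron_mult_kron x counit_alpha)
  finally show ?thesis unfolding hhom_def
    by (intro conjI carrier_matI) (simp_all add: x)
qed

lemma Hdd_delta_natural:
  assumes X: "hobj X" and Y: "hobj Y" and f: "hhom X Y f"
  shows "kron Y unit_delta * kron f (1\<^sub>m n) = kron (kron f (1\<^sub>m n)) (1\<^sub>m n) * kron X unit_delta"
proof -
  note x = hobj_inv_of[OF X] and y = hobj_inv_of[OF Y]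
  have fd: "dim_row f = dim_row Y" "dim_col f = dim_row X" and fe: "Y * f = f * X"
    using f by (auto simp: hhom_def)
  have "kron Y unit_delta * kron f (1\<^sub>m n) = kron (Y * f) unit_delta"
    by (simp add: kron_mult_kron x y fd)
  also have "\<dots> = kron (f * X) (1\<^sub>m (n * n) * unit_delta)" by (simp add: fe)
  also have "\<dots> = kron (kron f (1\<^sub>m n)) (1\<^sub>m n) * kron X unit_delta"
    by (simp add: kron_assoc kron_mult_kron kron_one_mat x y fd)
  finally show ?thesis .
qed

lemma Hdd_eps_natural:
  assumes X: "hobj X" and Y: "hobj Y" and f: "hhom X Y f"
  shows "kron (inv_of Y) \<epsilon> * kron f (1\<^sub>m n) = f * kron (inv_of X) \<epsilon>"
proof -
  note x = hobj_inv_of[OF X] and y = hobj_inv_of[OF Y]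
  have fd: "dim_row f = dim_row Y" "dim_col f = dim_row X" and fe: "Y * f = f * X"
    using f by (auto simp: hhom_def)
  have "inv_of Y * f = inv_of Y * (Y * f) * inv_of X"
    by (simp add: fe assoc_mult_mat' x y fd)
  also have "inv_of Y * (Y * f) = f"
    by (simp add: assoc_mult_mat'[symmetric] x y fd)
  finally have "inv_of Y * f = f * inv_of X" .
  then show ?thesis by (simp add: kron_mult_kron mult_kron_single_row x y fd)
qed

lemma Hdd_law_terms_factor:
  assumes X: "hobj X"
  shows "kron (kron X unit_delta) (1\<^sub>m n) * kron X unit_delta
           = kron (X * X) (kron unit_delta (1\<^sub>m n) * unit_delta)"
    and "kron (kron X \<alpha>) unit_delta * kron X unit_delta = kron (X * X) (kron \<alpha> unit_delta * unit_delta)"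
    and "kron (kron (inv_of X) \<epsilon>) (1\<^sub>m n) * kron X unit_delta
           = kron (1\<^sub>m (dim_row X)) (kron \<epsilon> (1\<^sub>m n) * unit_delta)"
    and "kron (inv_of (kron X \<alpha>)) \<epsilon> * kron X unit_delta
           = kron (1\<^sub>m (dim_row X)) (kron (inv_of \<alpha>) \<epsilon> * unit_delta)"
  using hobj_inv_of[OF X] by (simp_all add: kron_assoc kron_mult_kron hobj_kron(2)[OF X obj])

lemma is_comonad_HddI:
  assumes unit_comonad_laws
  shows "is_comonad (Hdd_obj \<alpha>) (Hdd_mor \<alpha>) (Hdd_delta \<alpha> \<Delta>) (Hdd_eps \<alpha> \<epsilon>)"
  unfolding is_comonad_def Hdd_simps
proof (intro conjI allI impI; (elim conjE)?)
  fix X :: "'a mat" assume "hobj X"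
  then show "hobj (kron X \<alpha>)" by (rule hobj_kron(1)[OF _ obj])
next
  fix X Y f :: "'a mat" assume "hobj X" "hobj Y" "hhom X Y f"
  then show "hhom (kron X \<alpha>) (kron Y \<alpha>) (kron f (1\<^sub>m n))"
    using hhom_kron_one_mat datum_dims(1) by blast
next
  fix X :: "'a mat"
  show "kron (1\<^sub>m (dim_row X)) (1\<^sub>m n) = 1\<^sub>m (dim_row (kron X \<alpha>))"
    by (simp add: kron_one_mat)
next
  fix X Y Z f g :: "'a mat"
  assume "hhom X Y f" "hhom Y Z g"
  then have "dim_col g = dim_row f" by (auto simp: hhom_def)
  then show "kron (g * f) (1\<^sub>m n) = kron g (1\<^sub>m n) * kron f (1\<^sub>m n)"
    by (simp add: kron_mult_kron)
next
  fix X :: "'a mat" assume "hobj X"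
  then show "hhom (kron X \<alpha>) (kron (kron X \<alpha>) \<alpha>) (kron X unit_delta)"
    and "hhom (kron X \<alpha>) X (kron (inv_of X) \<epsilon>)"
    by (rule Hdd_delta_hhom, rule Hdd_eps_hhom)
next
  fix X Y f :: "'a mat" assume "hobj X" "hobj Y" "hhom X Y f"
  then show "kron Y unit_delta * kron f (1\<^sub>m n) = kron (kron f (1\<^sub>m n)) (1\<^sub>m n) * kron X unit_delta"
    and "kron (inv_of Y) \<epsilon> * kron f (1\<^sub>m n) = f * kron (inv_of X) \<epsilon>"
    by (rule Hdd_delta_natural, rule Hdd_eps_natural)
next
  fix X :: "'a mat" assume X: "hobj X"
  show "kron (kron X unit_delta) (1\<^sub>m n) * kron X unit_delta = kron (kron X \<alpha>) unit_delta * kron X unit_delta"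
    "kron (kron (inv_of X) \<epsilon>) (1\<^sub>m n) * kron X unit_delta = 1\<^sub>m (dim_row (kron X \<alpha>))"
    "kron (inv_of (kron X \<alpha>)) \<epsilon> * kron X unit_delta = 1\<^sub>m (dim_row (kron X \<alpha>))"
    using assms by (simp_all only: Hdd_law_terms_factor[OF X] unit_comonad_laws_def kron_one_mat kron_dims)
qed

lemma is_comonad_Hdd_iff:
  "is_comonad (Hdd_obj \<alpha>) (Hdd_mor \<alpha>) (Hdd_delta \<alpha> \<Delta>) (Hdd_eps \<alpha> \<epsilon>) \<longleftrightarrow> unit_comonad_laws"
proof
  assume "is_comonad (Hdd_obj \<alpha>) (Hdd_mor \<alpha>) (Hdd_delta \<alpha> \<Delta>) (Hdd_eps \<alpha> \<epsilon>)"
  then have "\<forall>X. hobj X \<longrightarrow>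
      kron (kron X unit_delta) (1\<^sub>m n) * kron X unit_delta = kron (kron X \<alpha>) unit_delta * kron X unit_delta \<and>
      kron (kron (inv_of X) \<epsilon>) (1\<^sub>m n) * kron X unit_delta = 1\<^sub>m (dim_row (kron X \<alpha>)) \<and>
      kron (inv_of (kron X \<alpha>)) \<epsilon> * kron X unit_delta = 1\<^sub>m (dim_row (kron X \<alpha>))"
    unfolding is_comonad_def Hdd_simps by (elim conjE) assumption
  from this[rule_format, OF hobj_one_mat[of 1]] show unit_comonad_laws
    by (simp add: unit_comonad_laws_def inv_of_one_mat)
qed (rule is_comonad_HddI)

lemma comodule_coassoc_iff:
  assumes M: "hobj M" and \<rho>: "dim_row \<rho> = dim_row M * n" "dim_col \<rho> = dim_row M"
  shows "kron M \<Delta> * \<rho> = kron \<rho> \<alpha> * \<rho> \<longleftrightarrow> kron \<rho> (1\<^sub>m n) * \<rho> = kron M unit_delta * \<rho>"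
proof -
  note m = hobj_inv_of[OF M]
  define P where "P = kron (1\<^sub>m (dim_row M)) (kron (1\<^sub>m n) \<alpha>)"
  define Q where "Q = kron (1\<^sub>m (dim_row M)) (kron (1\<^sub>m n) (inv_of \<alpha>))"
  have P_dims: "dim_row P = dim_row M * (n * n)" "dim_col P = dim_row M * (n * n)"
    and Q_dims: "dim_row Q = dim_row M * (n * n)" "dim_col Q = dim_row M * (n * n)"
    by (simp_all add: P_def Q_def)
  have "kron \<rho> \<alpha> = P * kron \<rho> (1\<^sub>m n)"
    unfolding P_def by (simp add: kron_assoc[symmetric] kron_one_mat kron_mult_kron \<rho>)
  then have P_factor: "kron \<rho> \<alpha> * \<rho> = P * (kron \<rho> (1\<^sub>m n) * \<rho>)"
    by (simp only:) (rule assoc_mult_mat', simp_all add: P_dims \<rho> mult.assoc)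
  have "kron M unit_delta = Q * kron M \<Delta>"
    unfolding Q_def unit_delta_def by (simp add: kron_mult_kron m)
  then have Q_factor: "kron M unit_delta * \<rho> = Q * (kron M \<Delta> * \<rho>)"
    by (simp only:) (rule assoc_mult_mat', simp_all add: Q_dims \<rho> m)
  have "P * Q = 1\<^sub>m (dim_row M * (n * n))" "Q * P = 1\<^sub>m (dim_row M * (n * n))"
    unfolding P_def Q_def by (simp_all add: kron_mult_kron kron_one_mat)
  then show ?thesis unfolding P_factor Q_factor
    by (rule eq_mult_iff_inverse_eq) (simp_all add: P_dims Q_dims \<rho> mult.assoc[where 'a = nat])
qed

lemma comodule_counit_iff:
  assumes M: "hobj M" and \<rho>: "dim_row \<rho> = dim_row M * n" "dim_col \<rho> = dim_row M"
  shows "kron (1\<^sub>m (dim_row M)) \<epsilon> * \<rho> = M \<longleftrightarrow> kron (inv_of M) \<epsilon> * \<rho> = 1\<^sub>m (dim_row M)"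
proof -
  note m = hobj_inv_of[OF M]
  have "kron (inv_of M) \<epsilon> = inv_of M * kron (1\<^sub>m (dim_row M)) \<epsilon>"
    by (simp add: mult_kron_single_row m)
  then have e: "kron (inv_of M) \<epsilon> * \<rho> = inv_of M * (kron (1\<^sub>m (dim_row M)) \<epsilon> * \<rho>)"
    by (simp add: assoc_mult_mat' m \<rho>)
  have "kron (1\<^sub>m (dim_row M)) \<epsilon> * \<rho> = M * 1\<^sub>m (dim_row M) \<longleftrightarrow>
      1\<^sub>m (dim_row M) = inv_of M * (kron (1\<^sub>m (dim_row M)) \<epsilon> * \<rho>)"
    by (rule eq_mult_iff_inverse_eq) (simp_all add: m \<rho>)
  then show ?thesis unfolding e using m by auto
qed

lemma hom_comodule_iff_comonad_comodule:
  "hom_comodule \<alpha> \<Delta> \<epsilon> M \<rho> \<longleftrightarrow>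
   comonad_comodule (Hdd_obj \<alpha>) (Hdd_mor \<alpha>) (Hdd_delta \<alpha> \<Delta>) (Hdd_eps \<alpha> \<epsilon>) M \<rho>"
proof (cases "hobj M \<and> hhom M (kron M \<alpha>) \<rho>")
  case True
  then have "hobj M" "dim_row \<rho> = dim_row M * n" "dim_col \<rho> = dim_row M"
    by (auto simp: hhom_def)
  with True show ?thesis
    unfolding hom_comodule_def comonad_comodule_def Hdd_simps
    using comodule_coassoc_iff comodule_counit_iff by blast
qed (auto simp: hom_comodule_def comonad_comodule_def Hdd_simps)

lemma hom_comodule_hom_iff_comonad_comodule_hom:
  "hom_comodule_hom \<alpha> M \<rho> N \<sigma> f \<longleftrightarrow> comonad_comodule_hom (Hdd_obj \<alpha>) (Hdd_mor \<alpha>) M \<rho> N \<sigma> f"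
  by (simp add: hom_comodule_hom_def comonad_comodule_hom_def Hdd_simps)

end

theorem lemma4p1:
  fixes \<alpha>H \<Delta> \<epsilon> :: "'k::field_char_0 mat"
  assumes H: "hobj \<alpha>H"
    and Delta: "hhom \<alpha>H (kron \<alpha>H \<alpha>H) \<Delta>"
    and eps: "hhom \<alpha>H (1\<^sub>m 1) \<epsilon>"
  shows "(is_comonad (Hdd_obj \<alpha>H) (Hdd_mor \<alpha>H) (Hdd_delta \<alpha>H \<Delta>) (Hdd_eps \<alpha>H \<epsilon>)
           \<longleftrightarrow> hom_coalgebra \<alpha>H \<Delta> \<epsilon>) \<and>
         (hom_coalgebra \<alpha>H \<Delta> \<epsilon> \<longrightarrow>
           (\<forall>\<alpha>M \<rho>. hom_comodule \<alpha>H \<Delta> \<epsilon> \<alpha>M \<rho> \<longleftrightarrow>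
              comonad_comodule (Hdd_obj \<alpha>H) (Hdd_mor \<alpha>H) (Hdd_delta \<alpha>H \<Delta>) (Hdd_eps \<alpha>H \<epsilon>) \<alpha>M \<rho>)
         \<and> (\<forall>\<alpha>M \<rho> \<alpha>N \<sigma> f. hom_comodule \<alpha>H \<Delta> \<epsilon> \<alpha>M \<rho> \<and> hom_comodule \<alpha>H \<Delta> \<epsilon> \<alpha>N \<sigma> \<longrightarrow>
              (hom_comodule_hom \<alpha>H \<alpha>M \<rho> \<alpha>N \<sigma> f \<longleftrightarrow>
               comonad_comodule_hom (Hdd_obj \<alpha>H) (Hdd_mor \<alpha>H) \<alpha>M \<rho> \<alpha>N \<sigma> f)))"
proof -
  interpret hom_coalgebra_datum \<alpha>H \<Delta> \<epsilon>
    using H Delta eps by unfold_locales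
  show ?thesis
    using is_comonad_Hdd_iff hom_coalgebra_iff_unit_comonad_laws
      hom_comodule_iff_comonad_comodule hom_comodule_hom_iff_comonad_comodule_hom
    by blast
qed

end
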